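(* For the quasi-random router for any transition matrix $P$, $$\left|I_{v,u}[z,z')-(z'-z)P_{v,u}\right|\le 2\lg(z'-z+1)$$ for all $v,u\in V$ and all $z,z'\in\mathbb{Z}_{\ge0}$ with $z'>z$.
   Context: $V=\{1,\dots,N\}$, $P$ a stochastic $N\times N$ matrix, $\mathcal N(v)=\{u:P_{v,u}>0\}$, $\delta(v)=|\mathcal N(v)|$; $\lg=\log_2$. The van der Corput function $\psi:\mathbb{Z}_{\ge0}\to[0,1)$ is $\psi(0)=0$ and, for $i>0$ written in binary as $i=\sum_{j=0}^{\lfloor\lg i\rfloor}\beta_j(i)2^j$ with $\beta_j(i)\in\{0,1\}$, $\psi(i)=\sum_{j=0}^{\lfloor\lg i\rfloor}\beta_j(i)2^{-(j+1)}$. The quasi-random router: fix an ordering $u_1,\dots,u_{\delta(v)}$ of $\mathcal N(v)$ and set $\sigma_v(i)=u_k$ where $k$ is such that $\sum_{j=1}^{k-1}P_{v,u_j}\le\psi(i)<\sum_{j=1}^{k}P_{v,u_j}$. $I_{v,u}[z,z')=|\{j\in\{z,\dots,z'-1\}:\sigma_v(j)=u\}|$. *)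

theory Defs
  imports "HOL-Analysis.Analysis"
begin

definition stochastic :: "nat \<Rightarrow> (nat \<Rightarrow> nat \<Rightarrow> real) \<Rightarrow> bool" where
  "stochastic N P \<longleftrightarrow> (\<forall>v\<in>{1..N}. \<forall>u\<in>{1..N}. P v u \<ge> 0) \<and>
                       (\<forall>v\<in>{1..N}. (\<Sum>u\<in>{1..N}. P v u) = 1)"

definition nbrs :: "nat \<Rightarrow> (nat \<Rightarrow> nat \<Rightarrow> real) \<Rightarrow> nat \<Rightarrow> nat set" where
  "nbrs N P v = {u\<in>{1..N}. P v u > 0}"

text \<open>van der Corput function: psi 0 = 0, and for i > 0,
  psi i = sum over j = 0..floor(lg i) of beta_j(i) 2^(-(j+1)), beta_j(i) the j-th binary digit.\<close>
definition vdc :: "nat \<Rightarrow> real" where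
  "vdc i = (if i = 0 then 0 else
     (\<Sum>j\<in>{0..nat \<lfloor>log 2 (real i)\<rfloor>}. real ((i div 2 ^ j) mod 2) / 2 ^ (j + 1)))"

text \<open>Quasi-random router at v, given an ordering us = [u_1,...,u_delta] of N(v):
  sigma_v(i) = u_k where sum_{j<k} P v u_j <= psi(i) < sum_{j<=k} P v u_j.\<close>
definition qr_router :: "(nat \<Rightarrow> nat \<Rightarrow> real) \<Rightarrow> nat \<Rightarrow> nat list \<Rightarrow> nat \<Rightarrow> nat" where
  "qr_router P v us i = us ! ((THE k. k \<in> {1..length us} \<and>
       (\<Sum>j=1..k-1. P v (us ! (j-1))) \<le> vdc i \<and>
       vdc i < (\<Sum>j=1..k. P v (us ! (j-1)))) - 1)"

text \<open>I_{v,u}[z,z') for a router sigma (sigma v i = vertex chosen at the i-th visit of v).\<close>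
definition Icount :: "(nat \<Rightarrow> nat \<Rightarrow> nat) \<Rightarrow> nat \<Rightarrow> nat \<Rightarrow> nat \<Rightarrow> nat \<Rightarrow> nat" where
  "Icount \<sigma> v u z z' = card {j\<in>{z..<z'}. \<sigma> v j = u}"

end

theory Submission
  imports Defs
begin

text \<open>The router sends the \<open>i\<close>-th visit of \<open>v\<close> to \<open>u\<close> exactly when \<open>\<psi>(i)\<close> lies in an interval
  \<open>[s, t)\<close> of length \<open>P v u\<close>, cut out of \<open>[0, 1)\<close> by the prefix sums of the row of \<open>P\<close>. So it
  suffices to bound, for every window of \<open>n\<close> consecutive indices, the discrepancy \<open>D(n)\<close> between
  the number of \<open>\<psi>(j) < x\<close> and \<open>n x\<close>. Since \<open>\<psi>(2m) = \<psi>(m)/2\<close> and \<open>\<psi>(2m+1) = 1/2 + \<psi>(m)/2\<close>,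
  a window splits into its even and odd indices, which are windows of at most \<open>\<lceil>n/2\<rceil>\<close> indices
  for \<open>\<psi>\<close> again and whose sizes differ by at most one: for \<open>x \<le> 1/2\<close> only the even half can
  contribute (with threshold \<open>2x\<close>), for \<open>x > 1/2\<close> the whole even half does and the odd half is
  tested against \<open>2x - 1\<close>. This gives \<open>D(n) \<le> D(\<lceil>n/2\<rceil>) + 1/2\<close>, whence
  \<open>D(n) \<le> lg(n - 1)/2 + 3/2 \<le> lg(n + 1)\<close>, and an interval \<open>[s, t)\<close> costs twice that.\<close>

lemma vdc_eq_digit_sum:
  assumes "i < 2 ^ K"
  shows "vdc i = (\<Sum>j<K. real (i div 2 ^ j mod 2) / 2 ^ (j + 1))"
proof (cases "i = 0")
  case True
  then show ?thesis by (simp add: vdc_def)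
next
  case False
  define L where "L = nat \<lfloor>log 2 (real i)\<rfloor>"
  have "\<lfloor>log 2 (real i)\<rfloor> = int L"
    using False by (simp add: L_def)
  then have L: "2 ^ L \<le> i" "i < 2 ^ Suc L"
    using floor_log_nat_eq_powr_iff[of 2 i L] False by simp_all
  have "Suc L \<le> K"
  proof (rule ccontr)
    assume "\<not> Suc L \<le> K"
    then have "(2::nat) ^ K \<le> 2 ^ L" by (intro power_increasing) simp_all
    with L(1) assms show False by linarith
  qed
  have "vdc i = (\<Sum>j<Suc L. real (i div 2 ^ j mod 2) / 2 ^ (j + 1))"
    using False by (simp add: vdc_def L_def atLeast0AtMost lessThan_Suc_atMost)
  also have "\<dots> = (\<Sum>j<K. real (i div 2 ^ j mod 2) / 2 ^ (j + 1))"
  proof (rule sum.mono_neutral_left)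
    show "\<forall>j\<in>{..<K} - {..<Suc L}. real (i div 2 ^ j mod 2) / 2 ^ (j + 1) = 0"
    proof
      fix j assume "j \<in> {..<K} - {..<Suc L}"
      then have "(2::nat) ^ Suc L \<le> 2 ^ j" by (intro power_increasing) simp_all
      with L(2) show "real (i div 2 ^ j mod 2) / 2 ^ (j + 1) = 0" by simp
    qed
  qed (use \<open>Suc L \<le> K\<close> in auto)
  finally show ?thesis .
qed

lemma vdc_double: "vdc (2 * m) = vdc m / 2"
  and vdc_Suc_double: "vdc (Suc (2 * m)) = 1 / 2 + vdc m / 2"
proof -
  have m: "m < 2 ^ m" by simp
  then have "2 * m < 2 ^ Suc m" "Suc (2 * m) < 2 ^ Suc m" by (simp_all only: power_Suc)
  from this[THEN vdc_eq_digit_sum] show "vdc (2 * m) = vdc m / 2" "vdc (Suc (2 * m)) = 1 / 2 + vdc m / 2"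
    unfolding vdc_eq_digit_sum[OF m] sum.lessThan_Suc_shift
    by (simp_all add: sum_divide_distrib div_mult2_eq)
qed

lemma vdc_nonneg: "0 \<le> vdc m"
  and vdc_less_one: "vdc m < 1"
proof -
  have "0 \<le> vdc m \<and> vdc m < 1"
  proof (induction m rule: nat_bit_induct)
    case zero
    then show ?case by (simp add: vdc_def)
  qed (simp_all only: vdc_double vdc_Suc_double, simp_all)
  then show "0 \<le> vdc m" "vdc m < 1" by simp_all
qed

definition discrepancy_bound :: "nat \<Rightarrow> real" where
  "discrepancy_bound n = (if n \<le> 1 then real n else log 2 (real n - 1) / 2 + 3 / 2)"

lemma discrepancy_bound_mono:
  assumes "m \<le> n"
  shows "discrepancy_bound m \<le> discrepancy_bound n"
proof (cases "m \<le> 1")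
  case True
  then have "discrepancy_bound m \<le> 1" by (simp add: discrepancy_bound_def)
  moreover have "1 \<le> discrepancy_bound n" if "1 \<le> n"
  proof (cases "n = 1")
    case False
    with that have "\<not> n \<le> 1" by simp
    then have "0 \<le> log 2 (real n - 1)"
      and "discrepancy_bound n = log 2 (real n - 1) / 2 + 3 / 2"
      by (simp_all add: discrepancy_bound_def)
    then show ?thesis by linarith
  qed (simp add: discrepancy_bound_def)
  ultimately show ?thesis
    using assms by (cases "n = 0") (simp_all add: discrepancy_bound_def)
qed (use assms in \<open>auto simp: discrepancy_bound_def\<close>)

lemma discrepancy_bound_halve:
  assumes "2 \<le> n"
  shows "discrepancy_bound ((n + 1) div 2) + 1 / 2 \<le> discrepancy_bound n"
proof (cases "n = 2")
  case False
  define k where "k = (n + 1) div 2"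
  have "2 \<le> k" "2 * (real k - 1) \<le> real n - 1"
    using assms False by (simp_all add: k_def)
  then have "log 2 (2 * (real k - 1)) \<le> log 2 (real n - 1)"
    by simp
  then have "1 + log 2 (real k - 1) \<le> log 2 (real n - 1)"
    using \<open>2 \<le> k\<close> log_mult[of 2 2 "real k - 1"] by simp
  moreover have "discrepancy_bound k = log 2 (real k - 1) / 2 + 3 / 2"
    using \<open>2 \<le> k\<close> by (simp add: discrepancy_bound_def)
  ultimately show ?thesis
    unfolding k_def[symmetric] using assms by (simp add: discrepancy_bound_def[of n])
qed (simp add: discrepancy_bound_def)

lemma discrepancy_bound_le_log: "discrepancy_bound n \<le> log 2 (real (n + 1))"
proof (cases "n \<le> 1")
  case False
  \<comment> \<open>\<open>(n + 1)\<^sup>2 - 8 (n - 1) = (n - 3)\<^sup>2\<close>\<close>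
  have "8 * (real n - 1) \<le> real (n + 1) ^ 2"
    using zero_le_power2[of "real n - 3"] by (simp add: power2_eq_square algebra_simps)
  then have "log 2 (8 * (real n - 1)) \<le> log 2 (real (n + 1) ^ 2)"
    using False by (subst log_le_cancel_iff) auto
  also have "\<dots> = 2 * log 2 (real (n + 1))"
    by (simp add: log_nat_power)
  finally have "log 2 (8 * (real n - 1)) \<le> 2 * log 2 (real (n + 1))" .
  moreover have "log 2 (8 * (real n - 1)) = 3 + log 2 (real n - 1)"
    using False log_mult[of 2 8 "real n - 1"] log_pow_cancel[of 2 3] by simp
  ultimately show ?thesis
    using False by (simp add: discrepancy_bound_def)
next
  case True
  then consider "n = 0" | "n = 1" by linarith
  then show ?thesis by cases (simp_all add: discrepancy_bound_def)
qed

lemma atLeastLessThan_eq_evens_Un_odds: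
  "{a..<b} = (\<lambda>m. 2 * m) ` {(a + 1) div 2..<(b + 1) div 2} \<union> (\<lambda>m. Suc (2 * m)) ` {a div 2..<b div 2}"
proof (intro equalityI subsetI)
  fix j assume "j \<in> {a..<b}"
  then show "j \<in> (\<lambda>m. 2 * m) ` {(a + 1) div 2..<(b + 1) div 2} \<union> (\<lambda>m. Suc (2 * m)) ` {a div 2..<b div 2}"
    by (cases "even j") (auto simp: image_iff elim!: evenE oddE)
qed auto

lemma sum_atLeastLessThan_split_parity:
  fixes f :: "nat \<Rightarrow> 'a::comm_monoid_add"
  shows "(\<Sum>j\<in>{a..<b}. f j)
           = (\<Sum>m\<in>{(a + 1) div 2..<(b + 1) div 2}. f (2 * m)) + (\<Sum>m\<in>{a div 2..<b div 2}. f (Suc (2 * m)))"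
proof -
  let ?E = "(\<lambda>m. 2 * m) ` {(a + 1) div 2..<(b + 1) div 2}" and ?O = "(\<lambda>m. Suc (2 * m)) ` {a div 2..<b div 2}"
  have "?E \<inter> ?O = {}"
    by (auto simp: image_iff) presburger
  then have "(\<Sum>j\<in>{a..<b}. f j) = sum f ?E + sum f ?O"
    using atLeastLessThan_eq_evens_Un_odds[of a b] by (simp add: sum.union_disjoint)
  also have "\<dots> = (\<Sum>m\<in>{(a + 1) div 2..<(b + 1) div 2}. f (2 * m)) + (\<Sum>m\<in>{a div 2..<b div 2}. f (Suc (2 * m)))"
  proof -
    have "inj_on (\<lambda>m::nat. 2 * m) A" "inj_on (\<lambda>m::nat. Suc (2 * m)) A" for A
      by (auto intro: inj_onI)
    then show ?thesis by (simp add: sum.reindex)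
  qed
  finally show ?thesis .
qed

definition vdc_count :: "real \<Rightarrow> nat \<Rightarrow> nat \<Rightarrow> real" where
  "vdc_count x a b = (\<Sum>j\<in>{a..<b}. if vdc j < x then 1 else 0)"

lemma vdc_count_low:
  assumes "x \<le> 1 / 2"
  shows "vdc_count x a b = vdc_count (2 * x) ((a + 1) div 2) ((b + 1) div 2)"
proof -
  have "vdc (2 * m) < x \<longleftrightarrow> vdc m < 2 * x" for m
    by (auto simp: vdc_double)
  moreover have "\<not> vdc (Suc (2 * m)) < x" for m
    using assms vdc_nonneg[of m] by (simp add: vdc_Suc_double)
  ultimately show ?thesis
    unfolding vdc_count_def sum_atLeastLessThan_split_parity[of _ a b] by simp
qed

lemma vdc_count_high:
  assumes "1 / 2 < x"
  shows "vdc_count x a b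
           = real ((b + 1) div 2 - (a + 1) div 2) + vdc_count (2 * x - 1) (a div 2) (b div 2)"
proof -
  have "vdc (2 * m) < x" for m
    using assms vdc_less_one[of m] by (simp add: vdc_double)
  moreover have "vdc (Suc (2 * m)) < x \<longleftrightarrow> vdc m < 2 * x - 1" for m
    by (auto simp: vdc_Suc_double)
  ultimately show ?thesis
    unfolding vdc_count_def sum_atLeastLessThan_split_parity[of _ a b] by simp
qed

lemma atLeastLessThan_parity_counts:
  fixes a b :: nat
  assumes "a \<le> b"
  defines "evens \<equiv> (b + 1) div 2 - (a + 1) div 2" and "odds \<equiv> b div 2 - a div 2"
  shows "evens + odds = b - a" and "evens \<le> odds + 1" and "odds \<le> evens + 1"
proof -
  have "a div 2 \<le> b div 2" "(a + 1) div 2 \<le> (b + 1) div 2"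
    using assms by (simp_all add: div_le_mono)
  moreover have "a = a div 2 + (a + 1) div 2" "b = b div 2 + (b + 1) div 2"
    by linarith+
  ultimately show "evens + odds = b - a" "evens \<le> odds + 1" "odds \<le> evens + 1"
    unfolding evens_def odds_def by linarith+
qed

lemma vdc_count_halve:
  assumes "0 \<le> x" "x \<le> 1" "a \<le> b"
  obtains a' b' x' where "0 \<le> x'" "x' \<le> 1" "b' - a' \<le> (b - a + 1) div 2"
    "\<bar>vdc_count x a b - real (b - a) * x\<bar> \<le> \<bar>vdc_count x' a' b' - real (b' - a') * x'\<bar> + 1 / 2"
proof -
  define evens where "evens = (b + 1) div 2 - (a + 1) div 2"
  define odds where "odds = b div 2 - a div 2"
  have n: "real (b - a) = real evens + real odds" and "\<bar>real evens - real odds\<bar> \<le> 1"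
    and "evens \<le> (b - a + 1) div 2" "odds \<le> (b - a + 1) div 2"
    using atLeastLessThan_parity_counts[OF assms(3)] unfolding evens_def odds_def by linarith+
  then have diff: "\<bar>(real evens - real odds) * y\<bar> \<le> 1 / 2" if "0 \<le> y" "y \<le> 1 / 2" for y
    using that mult_mono[of "\<bar>real evens - real odds\<bar>" 1 y "1 / 2"] by (simp add: abs_mult)
  show ?thesis
  proof (cases "x \<le> 1 / 2")
    case True
    let ?c = "vdc_count (2 * x) ((a + 1) div 2) ((b + 1) div 2)"
    have "vdc_count x a b - real (b - a) * x = (?c - real evens * (2 * x)) + (real evens - real odds) * x"
      unfolding vdc_count_low[OF True] n by (simp add: algebra_simps)
    then have "\<bar>vdc_count x a b - real (b - a) * x\<bar> \<le> \<bar>?c - real evens * (2 * x)\<bar> + 1 / 2"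
      using diff[of x] True assms(1) by linarith
    with True assms(1) \<open>evens \<le> (b - a + 1) div 2\<close> show ?thesis
      unfolding evens_def by (intro that[of "2 * x" "(b + 1) div 2" "(a + 1) div 2"]) simp_all
  next
    case False
    let ?c = "vdc_count (2 * x - 1) (a div 2) (b div 2)"
    have "vdc_count x a b - real (b - a) * x
        = (?c - real odds * (2 * x - 1)) + (real evens - real odds) * (1 - x)"
      unfolding vdc_count_high[OF not_le_imp_less[OF False]] n evens_def
      by (simp add: algebra_simps)
    then have "\<bar>vdc_count x a b - real (b - a) * x\<bar> \<le> \<bar>?c - real odds * (2 * x - 1)\<bar> + 1 / 2"
      using diff[of "1 - x"] False assms(2) by linarith
    with False assms(2) \<open>odds \<le> (b - a + 1) div 2\<close> show ?thesis
      unfolding odds_def by (intro that[of "2 * x - 1" "b div 2" "a div 2"]) simp_all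
  qed
qed

lemma vdc_count_discrepancy:
  assumes "0 \<le> x" "x \<le> 1"
  shows "\<bar>vdc_count x a b - real (b - a) * x\<bar> \<le> discrepancy_bound (b - a)"
  using assms
proof (induction "b - a" arbitrary: a b x rule: less_induct)
  case less
  consider "b - a = 0" | "b = Suc a" | "2 \<le> b - a" by linarith
  then show ?case
  proof cases
    case 1
    then show ?thesis by (simp add: vdc_count_def discrepancy_bound_def)
  next
    case 2
    with less.prems show ?thesis by (simp add: vdc_count_def discrepancy_bound_def)
  next
    case 3
    then have "a \<le> b" by simp
    obtain a' b' x' where x': "0 \<le> x'" "x' \<le> 1" and half: "b' - a' \<le> (b - a + 1) div 2"
      and step: "\<bar>vdc_count x a b - real (b - a) * x\<bar> \<le> \<bar>vdc_count x' a' b' - real (b' - a') * x'\<bar> + 1 / 2"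
      by (rule vdc_count_halve[OF less.prems \<open>a \<le> b\<close>])
    have "\<bar>vdc_count x' a' b' - real (b' - a') * x'\<bar> \<le> discrepancy_bound (b' - a')"
      using less.hyps[OF _ x'] half 3 by simp
    also have "\<dots> \<le> discrepancy_bound ((b - a + 1) div 2)"
      using half by (rule discrepancy_bound_mono)
    finally show ?thesis
      using step discrepancy_bound_halve[OF 3] by linarith
  qed
qed

lemma vdc_interval_discrepancy:
  assumes "0 \<le> s" "s \<le> t" "t \<le> 1"
  shows "\<bar>real (card {j \<in> {a..<b}. s \<le> vdc j \<and> vdc j < t}) - real (b - a) * (t - s)\<bar>
           \<le> 2 * log 2 (real (b - a + 1))"
proof -
  have "real (card {j \<in> {a..<b}. s \<le> vdc j \<and> vdc j < t})
          = (\<Sum>j\<in>{a..<b}. if s \<le> vdc j \<and> vdc j < t then 1 else 0)"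
    by (simp add: sum.inter_filter[symmetric])
  also have "\<dots> = vdc_count t a b - vdc_count s a b"
    unfolding vdc_count_def sum_subtractf[symmetric] using assms(2) by (intro sum.cong) auto
  moreover have "real (b - a) * (t - s) = real (b - a) * t - real (b - a) * s"
    by (simp add: right_diff_distrib)
  ultimately show ?thesis
    using vdc_count_discrepancy[of s a b] vdc_count_discrepancy[of t a b] assms
      discrepancy_bound_le_log[of "b - a"]
    by linarith
qed

lemma prefix_sum_interval:
  fixes w :: "nat \<Rightarrow> real"
  assumes pos: "\<And>j. j < L \<Longrightarrow> 0 < w j" and total: "(\<Sum>j<L. w j) = 1"
    and "0 \<le> t" "t < 1"
  shows "\<exists>!k. k < L \<and> (\<Sum>j<k. w j) \<le> t \<and> t < (\<Sum>j<Suc k. w j)"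
proof (rule ex_ex1I)
  define k where "k = (LEAST k. t < (\<Sum>j<Suc k. w j))"
  have "t < (\<Sum>j<Suc (L - 1). w j)"
    using total assms(4) \<open>0 \<le> t\<close> by (cases L) auto
  then have "t < (\<Sum>j<Suc k. w j)" and "k \<le> L - 1"
    unfolding k_def by (fact LeastI, fact Least_le)
  moreover have "(\<Sum>j<k. w j) \<le> t"
  proof (cases k)
    case (Suc k')
    then show ?thesis using not_less_Least[of k' "\<lambda>k. t < (\<Sum>j<Suc k. w j)"] k_def by simp
  qed (simp add: \<open>0 \<le> t\<close>)
  moreover have "0 < L" using total by (cases L) auto
  ultimately show "\<exists>k. k < L \<and> (\<Sum>j<k. w j) \<le> t \<and> t < (\<Sum>j<Suc k. w j)"
    by (intro exI[of _ k]) auto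
next
  have mono: "(\<Sum>j<m. w j) \<le> (\<Sum>j<n. w j)" if "m \<le> n" "n \<le> L" for m n
    using that pos by (intro sum_mono2) (auto intro: less_imp_le)
  fix k k' assume "k < L \<and> (\<Sum>j<k. w j) \<le> t \<and> t < (\<Sum>j<Suc k. w j)"
    and "k' < L \<and> (\<Sum>j<k'. w j) \<le> t \<and> t < (\<Sum>j<Suc k'. w j)"
  then show "k = k'"
    using mono[of "Suc k" k'] mono[of "Suc k'" k] by (cases k k' rule: linorder_cases) auto
qed

lemma qr_router_eq_nth:
  fixes P :: "nat \<Rightarrow> nat \<Rightarrow> real"
  assumes pos: "\<And>w. w \<in> set us \<Longrightarrow> 0 < P v w" and total: "sum_list (map (P v) us) = 1"
    and k: "k < length us" "(\<Sum>j<k. P v (us ! j)) \<le> vdc i" "vdc i < (\<Sum>j<Suc k. P v (us ! j))"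
  shows "qr_router P v us i = us ! k"
proof -
  let ?S = "\<lambda>m. \<Sum>j<m. P v (us ! j)"
  have shift: "(\<Sum>j=1..m. P v (us ! (j - 1))) = ?S m" for m
    by (simp add: sum.atLeast1_atMost_eq)
  have unique: "\<exists>!k. k < length us \<and> ?S k \<le> vdc i \<and> vdc i < ?S (Suc k)"
    using pos total vdc_nonneg vdc_less_one
    by (intro prefix_sum_interval) (auto simp: sum_list_sum_nth atLeast0LessThan)
  have "(THE m. m \<in> {1..length us} \<and> ?S (m - 1) \<le> vdc i \<and> vdc i < ?S m) = Suc k"
  proof (rule the_equality)
    fix m assume m: "m \<in> {1..length us} \<and> ?S (m - 1) \<le> vdc i \<and> vdc i < ?S m"
    then have "m - 1 < length us \<and> ?S (m - 1) \<le> vdc i \<and> vdc i < ?S (Suc (m - 1))"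
      by auto
    with unique k have "m - 1 = k" by blast
    with m show "m = Suc k" by auto
  qed (use k in simp)
  then show ?thesis
    unfolding qr_router_def shift by simp
qed

lemma qr_router_cases:
  fixes P :: "nat \<Rightarrow> nat \<Rightarrow> real"
  assumes "\<And>w. w \<in> set us \<Longrightarrow> 0 < P v w" and "sum_list (map (P v) us) = 1"
  obtains k where "k < length us" "(\<Sum>j<k. P v (us ! j)) \<le> vdc i"
    "vdc i < (\<Sum>j<Suc k. P v (us ! j))" "qr_router P v us i = us ! k"
proof -
  obtain k where "k < length us" "(\<Sum>j<k. P v (us ! j)) \<le> vdc i" "vdc i < (\<Sum>j<Suc k. P v (us ! j))"
    using prefix_sum_interval[of "length us" "\<lambda>j. P v (us ! j)" "vdc i"] assms vdc_nonneg vdc_less_one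
    by (auto simp: sum_list_sum_nth atLeast0LessThan)
  with qr_router_eq_nth[where P = P and v = v and us = us, OF assms] that show ?thesis by blast
qed

lemma qr_router_in_set:
  fixes P :: "nat \<Rightarrow> nat \<Rightarrow> real"
  assumes "\<And>w. w \<in> set us \<Longrightarrow> 0 < P v w" and "sum_list (map (P v) us) = 1"
  shows "qr_router P v us i \<in> set us"
  by (rule qr_router_cases[where P = P and v = v and us = us and i = i, OF assms]) auto

lemma qr_router_eq_nth_iff:
  fixes P :: "nat \<Rightarrow> nat \<Rightarrow> real"
  assumes "distinct us" "\<And>w. w \<in> set us \<Longrightarrow> 0 < P v w" "sum_list (map (P v) us) = 1"
    and "k < length us"
  shows "qr_router P v us i = us ! k
           \<longleftrightarrow> (\<Sum>j<k. P v (us ! j)) \<le> vdc i \<and> vdc i < (\<Sum>j<Suc k. P v (us ! j))"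
proof
  assume "qr_router P v us i = us ! k"
  with assms show "(\<Sum>j<k. P v (us ! j)) \<le> vdc i \<and> vdc i < (\<Sum>j<Suc k. P v (us ! j))"
    by (cases rule: qr_router_cases[where P = P and v = v and us = us and i = i, OF assms(2,3)])
      (auto simp: nth_eq_iff_index_eq)
qed (use qr_router_eq_nth[where P = P and v = v and us = us, OF assms(2,3,4)] in auto)

lemma qr_router_count_discrepancy:
  fixes P :: "nat \<Rightarrow> nat \<Rightarrow> real"
  assumes "distinct us" and pos: "\<And>w. w \<in> set us \<Longrightarrow> 0 < P v w"
    and total: "sum_list (map (P v) us) = 1" and "u \<in> set us"
  shows "\<bar>real (card {j \<in> {a..<b}. qr_router P v us j = u}) - real (b - a) * P v u\<bar>
           \<le> 2 * log 2 (real (b - a + 1))"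
proof -
  let ?S = "\<lambda>m. \<Sum>j<m. P v (us ! j)"
  obtain k where k: "k < length us" "u = us ! k"
    using \<open>u \<in> set us\<close> by (metis in_set_conv_nth)
  have nonneg: "0 \<le> P v (us ! j)" if "j < length us" for j
    using pos that by (simp add: less_imp_le)
  have "0 \<le> ?S k"
    using k nonneg by (intro sum_nonneg) simp
  moreover have "?S (Suc k) \<le> ?S (length us)"
    using k nonneg by (intro sum_mono2) auto
  moreover have "?S (length us) = 1"
    using total by (simp add: sum_list_sum_nth atLeast0LessThan)
  moreover have "P v u = ?S (Suc k) - ?S k"
    using k by simp
  moreover have "{j \<in> {a..<b}. qr_router P v us j = u} = {j \<in> {a..<b}. ?S k \<le> vdc j \<and> vdc j < ?S (Suc k)}"
    using qr_router_eq_nth_iff[where P = P and v = v and us = us, OF assms(1-3) k(1)] k(2) by simp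
  ultimately show ?thesis
    using vdc_interval_discrepancy[of "?S k" "?S (Suc k)" a b] k nonneg by simp
qed

lemma stochastic_notin_nbrs:
  assumes "stochastic N P" "v \<in> {1..N}" "u \<in> {1..N}" "u \<notin> nbrs N P v"
  shows "P v u = 0"
proof -
  have "0 \<le> P v u" "\<not> 0 < P v u"
    using assms by (simp_all add: stochastic_def nbrs_def)
  then show ?thesis by linarith
qed

lemma stochastic_sum_nbrs:
  assumes "stochastic N P" "v \<in> {1..N}"
  shows "(\<Sum>u\<in>nbrs N P v. P v u) = 1"
proof -
  have "(\<Sum>u\<in>nbrs N P v. P v u) = (\<Sum>u\<in>{1..N}. P v u)"
    using stochastic_notin_nbrs[OF assms] by (intro sum.mono_neutral_left) (auto simp: nbrs_def)
  then show ?thesis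
    using assms unfolding stochastic_def by simp
qed

theorem lemma5p5:
  fixes N :: nat and P :: "nat \<Rightarrow> nat \<Rightarrow> real" and ord :: "nat \<Rightarrow> nat list"
  assumes "stochastic N P"
    and "\<And>v. v \<in> {1..N} \<Longrightarrow> distinct (ord v) \<and> set (ord v) = nbrs N P v"
    and "v \<in> {1..N}" and "u \<in> {1..N}" and "z' > z"
  shows "\<bar>real (Icount (\<lambda>w i. qr_router P w (ord w) i) v u z z') - real (z' - z) * P v u\<bar>
           \<le> 2 * log 2 (real (z' - z + 1))"
proof -
  have distinct: "distinct (ord v)" and nbrs: "set (ord v) = nbrs N P v"
    using assms(2,3) by auto
  have pos: "0 < P v w" if "w \<in> set (ord v)" for w
    using that nbrs by (simp add: nbrs_def)
  have total: "sum_list (map (P v) (ord v)) = 1"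
    using stochastic_sum_nbrs[OF assms(1,3)] distinct nbrs by (simp add: sum_list_distinct_conv_sum_set)
  show ?thesis
  proof (cases "u \<in> set (ord v)")
    case True
    show ?thesis
      unfolding Icount_def
      by (rule qr_router_count_discrepancy[where P = P and v = v, OF distinct pos total True])
  next
    case False
    then have "P v u = 0"
      using stochastic_notin_nbrs[OF assms(1,3,4)] nbrs by simp
    moreover have "Icount (\<lambda>w i. qr_router P w (ord w) i) v u z z' = 0"
      using qr_router_in_set[where P = P and v = v and us = "ord v", OF pos total] False by (auto simp: Icount_def)
    ultimately show ?thesis by simp
  qed
qed

end
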